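(* Let $m\ge1$, $\zeta=\zeta_m$ a primitive $m$th root of unity, $t=1-\zeta$, $W^{(0)}_m=\prod_{j\in[0,m-1]}\mathbb{Z}[\zeta]$, and \[ W^{(1)}_m=\Bigl\{(y_j)_{j\in[0,m-1]}\in W^{(0)}_m\;\Bigm|\;\sum_{j\in[0,i]}(-1)^j\binom{i}{j}y_j\equiv0\pmod{t^i\mathbb{Z}[\zeta]}\ \text{for all }i\in[0,m-1]\Bigr\}. \] Let $C_m$ be cyclic with generator $c$ and $\omega_m\colon\mathbb{Z}[\zeta]C_m\to W^{(0)}_m$, $c\mapsto(\zeta^j)_{j\in[0,m-1]}$, the cyclic Wedderburn embedding. Then: (i) the image of $\omega_m$ is contained in $W^{(1)}_m$; (ii) the elements $\xi_{m,i}:=\bigl((-1)^it^i\binom{j}{i}\bigr)_{j\in[0,m-1]}$, $i\in[0,m-1]$, form a $\mathbb{Z}[\zeta]$-linear basis of $W^{(1)}_m$; (iii) there are $\mathbb{Z}[\zeta]$-bases of $W^{(1)}_m$ and $W^{(0)}_m$ with respect to which the inclusion $W^{(1)}_m\subseteq W^{(0)}_m$ is diagonal with diagonal entries $t^0,t^1,\dots,t^{m-1}$ (its $(i+1)$st elementary divisor is $t^i$); (iv) the $\mathbb{Z}[\zeta]$-linear determinant of the inclusion $W^{(1)}_m\subseteq W^{(0)}_m$ is $t^{m(m-1)/2}$ (up to a unit).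
   Context: $\binom{j}{i}=0$ if $i>j$. $[a,b]=\{x\in\mathbb{Z}:a\le x\le b\}$. *)

theory Defs
  imports Complex_Main "HOL-Computational_Algebra.Polynomial" "Jordan_Normal_Form.Determinant"
begin

definition Zz :: "complex \<Rightarrow> complex set" where
  "Zz \<zeta> = {poly (map_poly of_int p) \<zeta> | p :: int poly. True}"

definition primitive_root :: "nat \<Rightarrow> complex \<Rightarrow> bool" where
  "primitive_root m \<zeta> \<longleftrightarrow> \<zeta> ^ m = 1 \<and> (\<forall>k. 0 < k \<longrightarrow> k < m \<longrightarrow> \<zeta> ^ k \<noteq> 1)"

definition W0 :: "nat \<Rightarrow> complex \<Rightarrow> (nat \<Rightarrow> complex) set" where
  "W0 m \<zeta> = {y. (\<forall>j<m. y j \<in> Zz \<zeta>) \<and> (\<forall>j\<ge>m. y j = 0)}"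

definition cong0_mod :: "complex \<Rightarrow> complex \<Rightarrow> complex \<Rightarrow> bool" where
  "cong0_mod \<zeta> a d \<longleftrightarrow> (\<exists>z\<in>Zz \<zeta>. a = d * z)"

definition W1 :: "nat \<Rightarrow> complex \<Rightarrow> (nat \<Rightarrow> complex) set" where
  "W1 m \<zeta> = {y \<in> W0 m \<zeta>. \<forall>i<m.
      cong0_mod \<zeta> (\<Sum>j\<le>i. (-1) ^ j * of_nat (i choose j) * y j) ((1 - \<zeta>) ^ i)}"

text \<open>Cyclic Wedderburn embedding: the group ring element sum_{k<m} a_k c^k
  (coefficients a_k in Z[zeta]) is mapped to (sum_k a_k zeta^(j k))_j.\<close>
definition omega :: "nat \<Rightarrow> complex \<Rightarrow> (nat \<Rightarrow> complex) \<Rightarrow> (nat \<Rightarrow> complex)" where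
  "omega m \<zeta> a = (\<lambda>j. if j < m then (\<Sum>k<m. a k * \<zeta> ^ (j * k)) else 0)"

definition group_ring :: "nat \<Rightarrow> complex \<Rightarrow> (nat \<Rightarrow> complex) set" where
  "group_ring m \<zeta> = {a. (\<forall>k<m. a k \<in> Zz \<zeta>)}"

definition lincomb :: "nat \<Rightarrow> (nat \<Rightarrow> complex) \<Rightarrow> (nat \<Rightarrow> nat \<Rightarrow> complex) \<Rightarrow> (nat \<Rightarrow> complex)" where
  "lincomb m a v = (\<lambda>j. \<Sum>i<m. a i * v i j)"

definition is_basis :: "nat \<Rightarrow> complex \<Rightarrow> (nat \<Rightarrow> complex) set \<Rightarrow> (nat \<Rightarrow> nat \<Rightarrow> complex) \<Rightarrow> bool" where
  "is_basis m \<zeta> M v \<longleftrightarrow> (\<forall>i<m. v i \<in> M) \<and>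
     (\<forall>y\<in>M. \<exists>!a. (\<forall>i<m. a i \<in> Zz \<zeta>) \<and> (\<forall>i\<ge>m. a i = 0) \<and> y = lincomb m a v)"

definition xi :: "nat \<Rightarrow> complex \<Rightarrow> nat \<Rightarrow> nat \<Rightarrow> complex" where
  "xi m \<zeta> i = (\<lambda>j. if j < m then (-1) ^ i * (1 - \<zeta>) ^ i * of_nat (j choose i) else 0)"

definition is_unit_Zz :: "complex \<Rightarrow> complex \<Rightarrow> bool" where
  "is_unit_Zz \<zeta> u \<longleftrightarrow> u \<in> Zz \<zeta> \<and> (\<exists>v\<in>Zz \<zeta>. u * v = 1)"

end

theory Submission
  imports Defs
begin

text \<open>The binomial transform \<open>(T y) i = \<Sum>j\<le>i. (-1)^j * (i choose j) * y j\<close> is an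
  involution, and it sends \<open>\<Sum>i. a i * \<xi> i\<close> to \<open>(c^i * a i)\<^sub>i\<close>, where
  \<open>\<xi> i = ((-1)^i * c^i * (j choose i))\<^sub>j\<close>. Hence the vectors \<open>y\<close> with
  \<open>(T y) i \<in> c^i \<int>[\<zeta>]\<close> for all \<open>i\<close> form a free module with basis \<open>\<xi>\<close>: for
  \<open>c = 1 - \<zeta>\<close> this is \<open>W1\<close>, for \<open>c = 1\<close> it is \<open>W0\<close>, and since \<open>\<xi> i\<close> for \<open>c\<close> is
  \<open>c^i\<close> times \<open>\<xi> i\<close> for \<open>1\<close>, these two bases diagonalise the inclusion. Any other pair of
  bases differs from them by matrices of unit determinant, so the determinant of the inclusion is
  \<open>\<Prod>i<m. c^i\<close> up to a unit. For (i), \<open>T\<close> maps \<open>(\<zeta>^(j*k))\<^sub>j\<close> to \<open>((1 - \<zeta>^k)^i)\<^sub>i\<close>,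
  and \<open>1 - \<zeta>^k\<close> is divisible by \<open>1 - \<zeta>\<close>.\<close>

lemma map_poly_of_int_add:
  "map_poly (of_int :: int \<Rightarrow> 'a :: comm_ring_1) (p + q) = map_poly of_int p + map_poly of_int q"
  by (rule poly_eqI) (simp add: coeff_map_poly)

lemma map_poly_of_int_uminus:
  "map_poly (of_int :: int \<Rightarrow> 'a :: comm_ring_1) (- p) = - map_poly of_int p"
  by (rule poly_eqI) (simp add: coeff_map_poly)

lemma map_poly_of_int_mult:
  "map_poly (of_int :: int \<Rightarrow> 'a :: comm_ring_1) (p * q) = map_poly of_int p * map_poly of_int q"
  by (rule poly_eqI) (simp add: coeff_map_poly coeff_mult)

lemma Zz_add: "x \<in> Zz z \<Longrightarrow> y \<in> Zz z \<Longrightarrow> x + y \<in> Zz z"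
  unfolding Zz_def by clarsimp (metis map_poly_of_int_add poly_add)

lemma Zz_mult: "x \<in> Zz z \<Longrightarrow> y \<in> Zz z \<Longrightarrow> x * y \<in> Zz z"
  unfolding Zz_def by clarsimp (metis map_poly_of_int_mult poly_mult)

lemma Zz_minus: "x \<in> Zz z \<Longrightarrow> - x \<in> Zz z"
  unfolding Zz_def by clarsimp (metis map_poly_of_int_uminus poly_minus)

lemma Zz_diff: "x \<in> Zz z \<Longrightarrow> y \<in> Zz z \<Longrightarrow> x - y \<in> Zz z"
  using Zz_add[of x z "- y"] Zz_minus[of y z] by simp

lemma Zz_of_int [simp]: "of_int k \<in> Zz z"
  unfolding Zz_def by (rule CollectI, rule exI[of _ "[:k:]"]) (simp add: map_poly_pCons)

lemma Zz_0 [simp]: "0 \<in> Zz z"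
  using Zz_of_int[of 0 z] by simp

lemma Zz_1 [simp]: "1 \<in> Zz z"
  using Zz_of_int[of 1 z] by simp

lemma Zz_of_nat [simp]: "of_nat k \<in> Zz z"
  using Zz_of_int[of "int k" z] by simp

lemma Zz_generator [simp]: "z \<in> Zz z"
  unfolding Zz_def by (rule CollectI, rule exI[of _ "[:0, 1:]"]) (simp add: map_poly_pCons)

lemma Zz_power: "x \<in> Zz z \<Longrightarrow> x ^ n \<in> Zz z"
  by (induction n) (auto intro: Zz_mult)

lemma Zz_sum: "(\<And>i. i \<in> A \<Longrightarrow> f i \<in> Zz z) \<Longrightarrow> sum f A \<in> Zz z"
  by (induction A rule: infinite_finite_induct) (auto intro: Zz_add)

lemma Zz_prod: "(\<And>i. i \<in> A \<Longrightarrow> f i \<in> Zz z) \<Longrightarrow> prod f A \<in> Zz z"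
  by (induction A rule: infinite_finite_induct) (auto intro: Zz_mult)

lemmas Zz_intros = Zz_add Zz_mult Zz_minus Zz_diff Zz_power Zz_sum Zz_prod

lemma Zz_one_minus_generator: "1 - z \<in> Zz z"
  by (intro Zz_intros) simp_all

lemma is_unit_Zz_mult: "is_unit_Zz z u \<Longrightarrow> is_unit_Zz z v \<Longrightarrow> is_unit_Zz z (u * v)"
  unfolding is_unit_Zz_def by (metis Zz_mult mult.left_commute mult_1_right)

definition binomial_transform :: "(nat \<Rightarrow> 'a :: comm_ring_1) \<Rightarrow> nat \<Rightarrow> 'a" where
  "binomial_transform y i = (\<Sum>j\<le>i. (-1) ^ j * of_nat (i choose j) * y j)"

lemma binomial_transform_cong:
  "(\<And>j. j \<le> i \<Longrightarrow> y j = y' j) \<Longrightarrow> binomial_transform y i = binomial_transform y' i"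
  unfolding binomial_transform_def by (intro sum.cong) auto

lemma binomial_transform_Zz:
  "(\<And>j. j \<le> i \<Longrightarrow> y j \<in> Zz z) \<Longrightarrow> binomial_transform y i \<in> Zz z"
  unfolding binomial_transform_def by (intro Zz_intros) auto

lemma minus_one_power_mult_minus_one_power:
  assumes "k \<le> i"
  shows "(-1 :: 'a :: comm_ring_1) ^ i * (-1) ^ k = (-1) ^ (i - k)"
proof -
  have "(-1 :: 'a) ^ i * (-1) ^ k = (-1) ^ ((i - k) + 2 * k)"
    using assms by (simp add: algebra_simps flip: power_add)
  also have "\<dots> = (-1) ^ (i - k)"
    by (simp only: power_add power_mult power2_minus power_one mult_1_right)
  finally show ?thesis .
qed

lemma signed_choose_mult_choose:
  assumes "k \<le> i" "i \<le> j"
  shows "(-1) ^ i * of_nat (j choose i) * ((-1) ^ k * of_nat (i choose k))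
    = of_nat (j choose k) * ((-1) ^ (i - k) * of_nat ((j - k) choose (i - k)) :: 'a :: comm_ring_1)"
proof -
  have "(-1) ^ i * of_nat (j choose i) * ((-1) ^ k * of_nat (i choose k))
      = ((-1) ^ i * (-1) ^ k) * (of_nat ((j choose i) * (i choose k)) :: 'a)"
    by (simp only: of_nat_mult ac_simps)
  also have "\<dots> = (-1) ^ (i - k) * of_nat ((j choose k) * ((j - k) choose (i - k)))"
    using assms by (simp only: minus_one_power_mult_minus_one_power choose_mult)
  finally show ?thesis
    by (simp only: of_nat_mult ac_simps)
qed

lemma alternating_choose_mult_choose_sum:
  "(\<Sum>i\<le>j. (-1) ^ i * of_nat (j choose i) * ((-1) ^ k * of_nat (i choose k)))
     = (if k = j then 1 else (0 :: 'a :: comm_ring_1))"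
proof (cases "k \<le> j")
  case False
  then show ?thesis by (auto intro!: sum.neutral simp: binomial_eq_0)
next
  case True
  have shifted: "(\<Sum>i=k..j. (-1) ^ (i - k) * of_nat ((j - k) choose (i - k)))
      = (\<Sum>l\<le>j - k. (-1) ^ l * of_nat ((j - k) choose l) :: 'a)"
    using True by (intro sum.reindex_bij_witness[of _ "\<lambda>l. l + k" "\<lambda>i. i - k"]) auto
  have "(\<Sum>i\<le>j. (-1) ^ i * of_nat (j choose i) * ((-1) ^ k * of_nat (i choose k)))
      = (\<Sum>i=k..j. of_nat (j choose k) * ((-1) ^ (i - k) * of_nat ((j - k) choose (i - k))) :: 'a)"
  proof (rule sum.mono_neutral_cong_right)
    show "\<forall>i\<in>{..j} - {k..j}. (-1) ^ i * of_nat (j choose i) * ((-1) ^ k * of_nat (i choose k)) = (0 :: 'a)"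
    proof
      fix i assume "i \<in> {..j} - {k..j}"
      then have "i < k" by auto
      then show "(-1) ^ i * of_nat (j choose i) * ((-1) ^ k * of_nat (i choose k)) = (0 :: 'a)"
        by (simp add: binomial_eq_0)
    qed
  next
    fix i assume "i \<in> {k..j}"
    then show "(-1) ^ i * of_nat (j choose i) * ((-1) ^ k * of_nat (i choose k))
      = (of_nat (j choose k) * ((-1) ^ (i - k) * of_nat ((j - k) choose (i - k))) :: 'a)"
      by (intro signed_choose_mult_choose) auto
  qed auto
  also have "\<dots> = of_nat (j choose k) * (\<Sum>l\<le>j - k. (-1) ^ l * of_nat ((j - k) choose l))"
    using True by (simp only: sum_distrib_left[symmetric] shifted)
  also have "\<dots> = (if k = j then 1 else 0)"
    using True choose_alternating_sum[of "j - k", where 'a = 'a] by (cases "k = j") simp_all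
  finally show ?thesis .
qed

lemma binomial_transform_involution:
  "binomial_transform (binomial_transform y) j = y j"
proof -
  have "binomial_transform (binomial_transform y) j
      = (\<Sum>i\<le>j. (-1) ^ i * of_nat (j choose i) * (\<Sum>k\<le>j. (-1) ^ k * of_nat (i choose k) * y k))"
    unfolding binomial_transform_def
  proof (intro sum.cong refl)
    fix i assume "i \<in> {..j}"
    then have "(\<Sum>k\<le>i. (-1) ^ k * of_nat (i choose k) * y k)
        = (\<Sum>k\<le>j. (-1) ^ k * of_nat (i choose k) * y k)"
      by (intro sum.mono_neutral_left) (auto simp: binomial_eq_0)
    then show "(-1) ^ i * of_nat (j choose i) * (\<Sum>k\<le>i. (-1) ^ k * of_nat (i choose k) * y k)
        = (-1) ^ i * of_nat (j choose i) * (\<Sum>k\<le>j. (-1) ^ k * of_nat (i choose k) * y k)"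
      by (rule arg_cong)
  qed
  also have "\<dots> = (\<Sum>k\<le>j. y k *
      (\<Sum>i\<le>j. (-1) ^ i * of_nat (j choose i) * ((-1) ^ k * of_nat (i choose k))))"
    unfolding sum_distrib_left by (subst sum.swap) (simp only: ac_simps)
  also have "\<dots> = (\<Sum>k\<le>j. if k = j then y k else 0)"
    by (intro sum.cong) (simp_all add: alternating_choose_mult_choose_sum)
  also have "\<dots> = y j"
    by simp
  finally show ?thesis .
qed

lemma binomial_transform_geometric:
  fixes x :: "'a :: comm_ring_1"
  shows "binomial_transform (\<lambda>j. x ^ j) i = (1 - x) ^ i"
proof -
  have "(1 - x) ^ i = (- x + 1) ^ i"
    by (simp only: diff_conv_add_uminus add.commute)
  also have "\<dots> = (\<Sum>j\<le>i. of_nat (i choose j) * (- x) ^ j * 1 ^ (i - j))"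
    using binomial_ring[of "- x" 1 i] .
  also have "\<dots> = binomial_transform (\<lambda>j. x ^ j) i"
    unfolding binomial_transform_def
    by (intro sum.cong refl) (simp only: power_minus[of x] power_one mult_1_left mult_1_right ac_simps)
  finally show ?thesis
    by (rule sym)
qed

lemma binomial_transform_sum_mult:
  "binomial_transform (\<lambda>j. \<Sum>k\<in>K. a k * f k j) i = (\<Sum>k\<in>K. a k * binomial_transform (f k) i)"
  unfolding binomial_transform_def sum_distrib_left by (subst sum.swap) (simp only: ac_simps)

lemma lincomb_cong:
  "(\<And>i. i < m \<Longrightarrow> a i = a' i) \<Longrightarrow> lincomb m a v = lincomb m a' v"
  unfolding lincomb_def by (intro ext sum.cong) auto

lemma lincomb_delta:
  assumes "i < m"
  shows "lincomb m (\<lambda>n. if n = i then 1 else 0) v = v i"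
proof
  fix j
  have "lincomb m (\<lambda>n. if n = i then 1 else 0) v j = (\<Sum>n<m. if n = i then v i j else 0)"
    unfolding lincomb_def by (intro sum.cong) auto
  then show "lincomb m (\<lambda>n. if n = i then 1 else 0) v j = v i j"
    using assms by simp
qed

lemma lincomb_lincomb:
  assumes "\<forall>l<m. w l = lincomb m (Y l) u"
  shows "lincomb m x w = lincomb m (\<lambda>n. \<Sum>l<m. x l * Y l n) u"
proof
  fix j
  have "lincomb m x w j = (\<Sum>l<m. x l * (\<Sum>n<m. Y l n * u n j))"
    unfolding lincomb_def using assms by (intro sum.cong refl) (simp add: lincomb_def)
  also have "\<dots> = (\<Sum>n<m. (\<Sum>l<m. x l * Y l n) * u n j)"
    unfolding sum_distrib_left sum_distrib_right by (subst sum.swap) (simp only: ac_simps)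
  finally show "lincomb m x w j = lincomb m (\<lambda>n. \<Sum>l<m. x l * Y l n) u j"
    unfolding lincomb_def .
qed

lemma is_basis_coords:
  assumes "is_basis m z M v" "\<forall>i<m. u i \<in> M"
  shows "\<exists>X. \<forall>i<m. (\<forall>k<m. X i k \<in> Zz z) \<and> u i = lincomb m (X i) v"
proof -
  have "\<exists>x. i < m \<longrightarrow> (\<forall>k<m. x k \<in> Zz z) \<and> u i = lincomb m x v" for i
    using assms unfolding is_basis_def by (metis (no_types, lifting))
  then show ?thesis by metis
qed

lemma is_basis_coeff_unique:
  assumes "is_basis m z M v" "lincomb m a v \<in> M" "lincomb m a v = lincomb m a' v"
    and "\<forall>k<m. a k \<in> Zz z" "\<forall>k<m. a' k \<in> Zz z" "i < m"
  shows "a i = a' i"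
proof -
  define trunc where "trunc b = (\<lambda>k. if k < m then b k else 0)" for b :: "nat \<Rightarrow> complex"
  have "lincomb m (trunc b) v = lincomb m b v" for b
    unfolding trunc_def by (rule lincomb_cong) simp
  then have "(\<forall>k<m. trunc b k \<in> Zz z) \<and> (\<forall>k\<ge>m. trunc b k = 0) \<and> lincomb m a v = lincomb m (trunc b) v"
    if "\<forall>k<m. b k \<in> Zz z" "lincomb m a v = lincomb m b v" for b
    using that unfolding trunc_def by simp
  moreover have "\<exists>!b. (\<forall>k<m. b k \<in> Zz z) \<and> (\<forall>k\<ge>m. b k = 0) \<and> lincomb m a v = lincomb m b v"
    using assms(1,2) unfolding is_basis_def by blast
  ultimately have "trunc a = trunc a'"
    using assms(3-5) by blast
  then show ?thesis
    using assms(6) unfolding trunc_def by metis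
qed

abbreviation coeff_mat :: "nat \<Rightarrow> (nat \<Rightarrow> nat \<Rightarrow> 'a) \<Rightarrow> 'a mat" where
  "coeff_mat m X \<equiv> mat m m (\<lambda>(i, k). X i k)"

lemma coeff_mat_mult:
  "coeff_mat m X * coeff_mat m Y = coeff_mat m (\<lambda>i n. \<Sum>l<m. X i l * Y l n :: 'a :: comm_ring_1)"
  by (rule eq_matI) (auto simp: scalar_prod_def lessThan_atLeast0 intro!: sum.cong)

lemma det_coeff_mat_mult:
  "det (coeff_mat m X) * det (coeff_mat m Y) = det (coeff_mat m (\<lambda>i n. \<Sum>l<m. X i l * Y l n :: 'a :: comm_ring_1))"
  using det_mult[of "coeff_mat m X" m "coeff_mat m Y"] by (simp add: coeff_mat_mult)

lemma det_coeff_mat_diagonal: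
  assumes "\<And>i k. i < m \<Longrightarrow> k < m \<Longrightarrow> X i k = (if i = k then d k else (0 :: 'a :: comm_ring_1))"
  shows "det (coeff_mat m X) = (\<Prod>k<m. d k)"
proof -
  have "det (coeff_mat m X) = prod_list (diag_mat (coeff_mat m X))"
    using assms by (intro det_upper_triangular) (auto simp: upper_triangular_def)
  also have "\<dots> = (\<Prod>k<m. d k)"
    using assms by (simp add: prod_list_diag_prod lessThan_atLeast0)
  finally show ?thesis .
qed

lemma det_coeff_mat_scale_columns:
  "det (coeff_mat m (\<lambda>i k. X i k * d k)) = det (coeff_mat m X) * (\<Prod>k<m. d k :: 'a :: comm_ring_1)"
proof -
  have "(\<Sum>l<m. X i l * (if l = k then d k else 0)) = X i k * d k" if "k < m" for i k
  proof -
    have "(\<Sum>l<m. X i l * (if l = k then d k else 0)) = (\<Sum>l<m. if l = k then X i k * d k else 0)"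
      by (rule sum.cong) auto
    also have "\<dots> = X i k * d k"
      using that by simp
    finally show ?thesis .
  qed
  then have "coeff_mat m (\<lambda>i k. X i k * d k)
      = coeff_mat m (\<lambda>i k. \<Sum>l<m. X i l * (if l = k then d k else 0))"
    by (intro eq_matI) auto
  then show ?thesis
    by (simp only: det_coeff_mat_mult[symmetric] det_coeff_mat_diagonal[of m _ d])
qed

lemma det_coeff_mat_factor_diagonal:
  assumes "\<forall>i<m. \<forall>k<m. A i k = (\<Sum>n<m. (P i n * d n) * Q n k :: 'a :: comm_ring_1)"
  shows "det (coeff_mat m A) = det (coeff_mat m P) * (\<Prod>k<m. d k) * det (coeff_mat m Q)"
proof -
  have "coeff_mat m A = coeff_mat m (\<lambda>i k. \<Sum>n<m. (P i n * d n) * Q n k)"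
    using assms by (intro eq_matI) simp_all
  then show ?thesis
    by (simp only: det_coeff_mat_mult[symmetric] det_coeff_mat_scale_columns)
qed

lemma det_coeff_mat_Zz:
  assumes "\<And>i k. i < m \<Longrightarrow> k < m \<Longrightarrow> X i k \<in> Zz z"
  shows "det (coeff_mat m X) \<in> Zz z"
  unfolding det_def using assms
  by (auto simp: sign_def intro!: Zz_intros)

lemma det_change_of_basis_is_unit:
  assumes v: "is_basis m z M v" and w: "is_basis m z M w"
    and X: "\<forall>i<m. \<forall>k<m. X i k \<in> Zz z" and vw: "\<forall>i<m. v i = lincomb m (X i) w"
  shows "is_unit_Zz z (det (coeff_mat m X))"
proof -
  have "\<forall>i<m. w i \<in> M"
    using w unfolding is_basis_def by (rule conjunct1)
  then obtain Y where Y: "\<forall>i<m. (\<forall>k<m. Y i k \<in> Zz z) \<and> w i = lincomb m (Y i) v"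
    using is_basis_coords[OF v] by blast
  have XY: "(\<Sum>l<m. X i l * Y l n) = (if n = i then 1 else 0)" if "i < m" "n < m" for i n
  proof (rule is_basis_coeff_unique[OF v, where a = "\<lambda>n. \<Sum>l<m. X i l * Y l n"
        and a' = "\<lambda>n. if n = i then 1 else 0" and i = n])
    have "lincomb m (\<lambda>n. \<Sum>l<m. X i l * Y l n) v = lincomb m (X i) w"
      using Y by (intro lincomb_lincomb[symmetric]) blast
    also have "\<dots> = v i"
      using vw \<open>i < m\<close> by simp
    finally have XY_v: "lincomb m (\<lambda>n. \<Sum>l<m. X i l * Y l n) v = v i" .
    moreover have "v i \<in> M"
      using v \<open>i < m\<close> unfolding is_basis_def by blast
    ultimately show "lincomb m (\<lambda>n. \<Sum>l<m. X i l * Y l n) v \<in> M"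
      by simp
    show "lincomb m (\<lambda>n. \<Sum>l<m. X i l * Y l n) v = lincomb m (\<lambda>n. if n = i then 1 else 0) v"
      unfolding XY_v lincomb_delta[OF \<open>i < m\<close>] ..
    show "\<forall>k<m. (\<Sum>l<m. X i l * Y l k) \<in> Zz z"
      using X Y \<open>i < m\<close> by (blast intro: Zz_sum Zz_mult)
  qed (simp_all add: \<open>n < m\<close>)
  have "det (coeff_mat m X) * det (coeff_mat m Y) = 1"
    unfolding det_coeff_mat_mult by (subst det_coeff_mat_diagonal[where d = "\<lambda>_. 1"]) (simp_all add: XY)
  moreover have "det (coeff_mat m X) \<in> Zz z" "det (coeff_mat m Y) \<in> Zz z"
    using X Y by (simp_all add: det_coeff_mat_Zz)
  ultimately show ?thesis
    unfolding is_unit_Zz_def by blast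
qed

definition binomial_family :: "nat \<Rightarrow> complex \<Rightarrow> nat \<Rightarrow> nat \<Rightarrow> complex" where
  "binomial_family m c i = (\<lambda>j. if j < m then (-1) ^ i * c ^ i * of_nat (j choose i) else 0)"

lemma xi_eq_binomial_family: "xi m z = binomial_family m (1 - z)"
  unfolding xi_def binomial_family_def ..

lemma binomial_family_eq_scale: "binomial_family m c i = (\<lambda>j. c ^ i * binomial_family m 1 i j)"
  unfolding binomial_family_def by (auto simp: ac_simps)

lemma binomial_family_in_W0: "c \<in> Zz z \<Longrightarrow> binomial_family m c i \<in> W0 m z"
  unfolding W0_def binomial_family_def by (auto intro!: Zz_intros)

lemma lincomb_binomial_family:
  assumes "j < m"
  shows "lincomb m a (binomial_family m c) j = binomial_transform (\<lambda>i. c ^ i * a i) j"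
proof -
  have "lincomb m a (binomial_family m c) j = (\<Sum>i<m. a i * ((-1) ^ i * c ^ i * of_nat (j choose i)))"
    using assms by (simp add: lincomb_def binomial_family_def)
  also have "\<dots> = (\<Sum>i\<le>j. a i * ((-1) ^ i * c ^ i * of_nat (j choose i)))"
    using assms by (intro sum.mono_neutral_right) (auto simp: binomial_eq_0)
  also have "\<dots> = binomial_transform (\<lambda>i. c ^ i * a i) j"
    unfolding binomial_transform_def by (intro sum.cong refl) (simp only: ac_simps)
  finally show ?thesis .
qed

lemma binomial_transform_lincomb_binomial_family:
  assumes "k < m"
  shows "binomial_transform (lincomb m a (binomial_family m c)) k = c ^ k * a k"
proof -
  have "binomial_transform (lincomb m a (binomial_family m c)) k
      = binomial_transform (binomial_transform (\<lambda>i. c ^ i * a i)) k"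
    using assms by (intro binomial_transform_cong) (simp add: lincomb_binomial_family)
  then show ?thesis
    by (simp only: binomial_transform_involution)
qed

lemma lincomb_binomial_family_inj:
  assumes "c ^ i \<noteq> 0" "i < m"
    and "lincomb m a (binomial_family m c) = lincomb m a' (binomial_family m c)"
  shows "a i = a' i"
proof -
  have "c ^ i * a i = c ^ i * a' i"
    using binomial_transform_lincomb_binomial_family[OF \<open>i < m\<close>] assms(3) by metis
  then show ?thesis
    using mult_left_cancel[OF assms(1)] by blast
qed

definition binomial_lattice :: "nat \<Rightarrow> complex \<Rightarrow> complex \<Rightarrow> (nat \<Rightarrow> complex) set" where
  "binomial_lattice m z c = {y \<in> W0 m z. \<forall>i<m. cong0_mod z (binomial_transform y i) (c ^ i)}"

lemma W1_eq_binomial_lattice: "W1 m z = binomial_lattice m z (1 - z)"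
  unfolding W1_def binomial_lattice_def binomial_transform_def ..

lemma W0_eq_binomial_lattice: "W0 m z = binomial_lattice m z 1"
  unfolding binomial_lattice_def cong0_mod_def W0_def
  by (auto intro: binomial_transform_Zz)

lemma binomial_lattice_subset_W0: "binomial_lattice m z c \<subseteq> W0 m z"
  unfolding binomial_lattice_def by blast

lemma binomial_lattice_eq_lincomb:
  assumes "y \<in> binomial_lattice m z c"
  shows "\<exists>a. (\<forall>i<m. a i \<in> Zz z) \<and> (\<forall>i\<ge>m. a i = 0) \<and> y = lincomb m a (binomial_family m c)"
proof -
  have "\<forall>i. \<exists>w. i < m \<longrightarrow> w \<in> Zz z \<and> binomial_transform y i = c ^ i * w"
    using assms unfolding binomial_lattice_def cong0_mod_def by blast
  then obtain w where w: "\<forall>i<m. w i \<in> Zz z \<and> binomial_transform y i = c ^ i * w i"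
    by metis
  define a where "a i = (if i < m then w i else 0)" for i
  have "y = lincomb m a (binomial_family m c)"
  proof (rule ext, cases)
    fix j assume "j < m"
    have "lincomb m a (binomial_family m c) j = binomial_transform (binomial_transform y) j"
      unfolding lincomb_binomial_family[OF \<open>j < m\<close>] using \<open>j < m\<close> w
      by (intro binomial_transform_cong) (simp add: a_def)
    then show "y j = lincomb m a (binomial_family m c) j"
      by (simp only: binomial_transform_involution)
  next
    fix j assume "\<not> j < m"
    then show "y j = lincomb m a (binomial_family m c) j"
      using assms by (simp add: binomial_lattice_def W0_def lincomb_def binomial_family_def)
  qed
  moreover have "\<forall>i<m. a i \<in> Zz z" "\<forall>i\<ge>m. a i = 0"
    using w by (simp_all add: a_def)
  ultimately show ?thesis
    by blast
qed

lemma is_basis_binomial_family: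
  assumes c: "c \<in> Zz z" and nz: "\<forall>i<m. c ^ i \<noteq> 0"
  shows "is_basis m z (binomial_lattice m z c) (binomial_family m c)"
  unfolding is_basis_def
proof (intro conjI allI impI ballI)
  fix i assume "i < m"
  have "binomial_transform (binomial_family m c i) k = c ^ k * (if k = i then 1 else 0)" if "k < m" for k
    using binomial_transform_lincomb_binomial_family[OF that] lincomb_delta[OF \<open>i < m\<close>] by metis
  then show "binomial_family m c i \<in> binomial_lattice m z c"
    unfolding binomial_lattice_def cong0_mod_def
    using binomial_family_in_W0[OF c] by auto
next
  fix y assume "y \<in> binomial_lattice m z c"
  then obtain a where a: "(\<forall>i<m. a i \<in> Zz z) \<and> (\<forall>i\<ge>m. a i = 0) \<and> y = lincomb m a (binomial_family m c)"
    using binomial_lattice_eq_lincomb by blast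
  show "\<exists>!a. (\<forall>i<m. a i \<in> Zz z) \<and> (\<forall>i\<ge>m. a i = 0) \<and> y = lincomb m a (binomial_family m c)"
  proof (rule ex1I[of _ a])
    fix a' assume a': "(\<forall>i<m. a' i \<in> Zz z) \<and> (\<forall>i\<ge>m. a' i = 0) \<and> y = lincomb m a' (binomial_family m c)"
    show "a' = a"
    proof
      fix i
      show "a' i = a i"
        using a a' nz lincomb_binomial_family_inj[of c i m a' a] by (cases "i < m") auto
    qed
  qed (fact a)
qed

lemma is_basis_W0_binomial_family: "is_basis m z (W0 m z) (binomial_family m 1)"
  unfolding W0_eq_binomial_lattice by (rule is_basis_binomial_family) simp_all

lemma omega_in_W1:
  assumes "a \<in> group_ring m z"
  shows "omega m z a \<in> W1 m z"
proof -
  have a: "\<forall>k<m. a k \<in> Zz z"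
    using assms unfolding group_ring_def by blast
  have "omega m z a \<in> W0 m z"
    unfolding W0_def omega_def using a by (auto intro!: Zz_intros)
  moreover have "cong0_mod z (binomial_transform (omega m z a) i) ((1 - z) ^ i)" if "i < m" for i
  proof -
    have "binomial_transform (omega m z a) i = binomial_transform (\<lambda>j. \<Sum>k<m. a k * (z ^ k) ^ j) i"
      using that by (intro binomial_transform_cong) (simp add: omega_def mult.commute flip: power_mult)
    also have "\<dots> = (\<Sum>k<m. a k * (1 - z ^ k) ^ i)"
      by (simp only: binomial_transform_sum_mult binomial_transform_geometric)
    also have "\<dots> = (\<Sum>k<m. a k * ((1 - z) ^ i * (\<Sum>l<k. z ^ l) ^ i))"
      by (simp only: one_diff_power_eq power_mult_distrib)
    also have "\<dots> = (1 - z) ^ i * (\<Sum>k<m. a k * (\<Sum>l<k. z ^ l) ^ i)"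
      by (simp only: sum_distrib_left ac_simps)
    finally show ?thesis
      unfolding cong0_mod_def using a by (auto intro!: Zz_intros)
  qed
  ultimately show ?thesis
    unfolding W1_eq_binomial_lattice binomial_lattice_def by blast
qed

lemma sum_lessThan_id: "(\<Sum>k<m. k) = m * (m - 1) div (2 :: nat)"
  by (cases m) (simp_all add: lessThan_Suc_atMost atMost_atLeast0 gauss_sum_nat mult.commute)

lemma det_binomial_lattice_inclusion:
  assumes c: "c \<in> Zz z" and nz: "\<forall>i<m. c ^ i \<noteq> 0"
    and b: "is_basis m z (binomial_lattice m z c) b" and e: "is_basis m z (W0 m z) e"
    and A: "\<forall>i<m. \<forall>k<m. A i k \<in> Zz z" and bA: "\<forall>i<m. b i = (\<lambda>j. \<Sum>k<m. A i k * e k j)"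
  shows "\<exists>u. is_unit_Zz z u \<and> det (coeff_mat m A) = c ^ (m * (m - 1) div 2) * u"
proof -
  have \<xi>: "is_basis m z (binomial_lattice m z c) (binomial_family m c)"
    using c nz by (rule is_basis_binomial_family)
  have "\<forall>i<m. b i \<in> binomial_lattice m z c"
    using b unfolding is_basis_def by (rule conjunct1)
  then obtain P where P: "\<forall>i<m. (\<forall>k<m. P i k \<in> Zz z) \<and> b i = lincomb m (P i) (binomial_family m c)"
    using is_basis_coords[OF \<xi>] by blast
  have "\<forall>i<m. binomial_family m 1 i \<in> W0 m z"
    by (simp add: binomial_family_in_W0)
  then obtain Q where Q: "\<forall>i<m. (\<forall>k<m. Q i k \<in> Zz z) \<and> binomial_family m 1 i = lincomb m (Q i) e"
    using is_basis_coords[OF e] by blast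
  have A_eq: "A i k = (\<Sum>n<m. (P i n * c ^ n) * Q n k)" if "i < m" "k < m" for i k
  proof (rule is_basis_coeff_unique[OF e, where a = "A i" and i = k])
    have Ae: "lincomb m (A i) e = b i"
      using bA \<open>i < m\<close> by (simp add: lincomb_def)
    also have "\<dots> = lincomb m (\<lambda>n. P i n * c ^ n) (binomial_family m 1)"
      using P \<open>i < m\<close> by (simp add: lincomb_def binomial_family_eq_scale[of m c] ac_simps)
    also have "\<dots> = lincomb m (\<lambda>k. \<Sum>n<m. (P i n * c ^ n) * Q n k) e"
      using Q by (intro lincomb_lincomb) blast
    finally show "lincomb m (A i) e = lincomb m (\<lambda>k. \<Sum>n<m. (P i n * c ^ n) * Q n k) e" .
    have "b i \<in> W0 m z"
      using b binomial_lattice_subset_W0 \<open>i < m\<close> unfolding is_basis_def by blast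
    then show "lincomb m (A i) e \<in> W0 m z"
      unfolding Ae .
    show "\<forall>k<m. (\<Sum>n<m. (P i n * c ^ n) * Q n k) \<in> Zz z"
      using P Q c \<open>i < m\<close> by (blast intro: Zz_sum Zz_mult Zz_power)
  qed (use A \<open>i < m\<close> \<open>k < m\<close> in auto)
  have "det (coeff_mat m A) = det (coeff_mat m P) * (\<Prod>k<m. c ^ k) * det (coeff_mat m Q)"
    using A_eq by (intro det_coeff_mat_factor_diagonal) blast
  also have "(\<Prod>k<m. c ^ k) = c ^ (m * (m - 1) div 2)"
    by (simp only: power_sum[symmetric] sum_lessThan_id)
  finally have "det (coeff_mat m A) = det (coeff_mat m P) * c ^ (m * (m - 1) div 2) * det (coeff_mat m Q)" .
  moreover have "is_unit_Zz z (det (coeff_mat m P))"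
    using det_change_of_basis_is_unit[OF b \<xi>] P by blast
  moreover have "is_unit_Zz z (det (coeff_mat m Q))"
    using det_change_of_basis_is_unit[OF is_basis_W0_binomial_family e] Q by blast
  ultimately show ?thesis
    by (intro exI[of _ "det (coeff_mat m P) * det (coeff_mat m Q)"]) (simp add: is_unit_Zz_mult ac_simps)
qed

lemma one_minus_primitive_root_power_nonzero:
  assumes "primitive_root m z" "i < m"
  shows "(1 - z) ^ i \<noteq> 0"
proof (cases "i = 0")
  case False
  then have "1 < m"
    using assms(2) by simp
  moreover have "\<forall>k. 0 < k \<longrightarrow> k < m \<longrightarrow> z ^ k \<noteq> 1"
    using assms(1) unfolding primitive_root_def by (rule conjunct2)
  ultimately have "z ^ 1 \<noteq> 1"
    by (simp only: zero_less_one simp_thms)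
  then have "1 - z \<noteq> 0"
    by simp
  then show ?thesis
    by (rule power_not_zero)
qed simp

lemma is_basis_W1_xi:
  assumes "primitive_root m \<zeta>"
  shows "is_basis m \<zeta> (W1 m \<zeta>) (xi m \<zeta>)"
  unfolding W1_eq_binomial_lattice xi_eq_binomial_family
  using Zz_one_minus_generator one_minus_primitive_root_power_nonzero[OF assms]
  by (intro is_basis_binomial_family) auto

theorem lemma3p18:
  fixes m :: nat and \<zeta> :: complex
  assumes "m \<ge> 1" and "primitive_root m \<zeta>"
  shows "omega m \<zeta> ` group_ring m \<zeta> \<subseteq> W1 m \<zeta>
    \<and> is_basis m \<zeta> (W1 m \<zeta>) (xi m \<zeta>)
    \<and> (\<exists>b e. is_basis m \<zeta> (W1 m \<zeta>) b \<and> is_basis m \<zeta> (W0 m \<zeta>) e \<and>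
               (\<forall>i<m. b i = (\<lambda>j. (1 - \<zeta>) ^ i * e i j)))
    \<and> (\<forall>b e A. is_basis m \<zeta> (W1 m \<zeta>) b \<longrightarrow> is_basis m \<zeta> (W0 m \<zeta>) e \<longrightarrow>
           (\<forall>i<m. \<forall>k<m. A i k \<in> Zz \<zeta>) \<longrightarrow>
           (\<forall>i<m. b i = (\<lambda>j. \<Sum>k<m. A i k * e k j)) \<longrightarrow>
           (\<exists>u. is_unit_Zz \<zeta> u \<and>
              det (mat m m (\<lambda>(i, k). A i k)) = (1 - \<zeta>) ^ (m * (m - 1) div 2) * u))"
proof (intro conjI allI impI)
  show "omega m \<zeta> ` group_ring m \<zeta> \<subseteq> W1 m \<zeta>"
    using omega_in_W1 by blast
  show basis_xi: "is_basis m \<zeta> (W1 m \<zeta>) (xi m \<zeta>)"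
    using assms(2) by (rule is_basis_W1_xi)
  show "\<exists>b e. is_basis m \<zeta> (W1 m \<zeta>) b \<and> is_basis m \<zeta> (W0 m \<zeta>) e \<and>
      (\<forall>i<m. b i = (\<lambda>j. (1 - \<zeta>) ^ i * e i j))"
  proof (intro exI conjI allI impI)
    show "is_basis m \<zeta> (W0 m \<zeta>) (binomial_family m 1)"
      by (rule is_basis_W0_binomial_family)
    show "xi m \<zeta> i = (\<lambda>j. (1 - \<zeta>) ^ i * binomial_family m 1 i j)" for i
      unfolding xi_eq_binomial_family by (rule binomial_family_eq_scale)
  qed (fact basis_xi)
next
  fix b e A
  assume "is_basis m \<zeta> (W1 m \<zeta>) b" "is_basis m \<zeta> (W0 m \<zeta>) e"
    "\<forall>i<m. \<forall>k<m. A i k \<in> Zz \<zeta>" "\<forall>i<m. b i = (\<lambda>j. \<Sum>k<m. A i k * e k j)"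
  then show "\<exists>u. is_unit_Zz \<zeta> u \<and>
      det (mat m m (\<lambda>(i, k). A i k)) = (1 - \<zeta>) ^ (m * (m - 1) div 2) * u"
    unfolding W1_eq_binomial_lattice
    using Zz_one_minus_generator one_minus_primitive_root_power_nonzero[OF assms(2)]
    by (intro det_binomial_lattice_inclusion) auto
qed

end
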